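(* Consider optimization problem (P2) below, under the standing assumptions. Then every optimal solution $(\bar P_1^*,\bm u_1^*,\bar P_2^*,\bm u_2^* )$ of (P2) has at least one transmitter at full power, i.e. $\bar P_1^*=P_1^{\max}$ or $\bar P_2^*=P_2^{\max}$.
   Context: Setting: two transmitters TX 1 (with $M_1$ antennas) and TX 2 (with $M_2$ antennas), and two single-antenna receivers RX 1, RX 2. For $i,j\in\{1,2\}$ the channel from TX $j$ to RX $i$ is $\bm h_{i,j}\sim\mathcal{CN}(\bm 0_{M_j},\mathbf R_{i,j})$, the four channel vectors being mutually independent, and each covariance $\mathbf R_{i,j}$ is Hermitian positive definite. For $i\in\{1,2\}$, $\bar i$ denotes the other index. The noise variance is $N_0>0$, the power budgets are $P_1^{\max}>0$, $P_2^{\max}>0$, and $\tau_1>0$ satisfies the feasibility condition $\mathbb{E}\big[\log_2\big(1+P_1^{\max}\|\bm h_{1,1}\|^2/N_0\big)\big]\ge\tau_1$. Problem (P2): the optimization variables are constants $\bar P_1\in[0,P_1^{\max}]$, $\bar P_2\in[0,P_2^{\max}]$ and beamformers $\bm u_1=\bm u_1(\bm h_{1,1})\in\mathbb C^{M_1}$, $\bm u_2=\bm u_2(\bm h_{2,2})\in\mathbb C^{M_2}$, where $\bm u_i$ is a measurable function of $\bm h_{i,i}$ only, with $\|\bm u_i\|=1$ almost surely. For $i\in\{1,2\}$ define $$\mathbb{E}\big[\tilde R_i(\bar P_1,\bm u_1,\bar P_2,\bm u_2)\big]=\mathbb{E}\left[\log_2\left(1+\frac{\bar P_i\,|\bm h_{i,i}^{H}\bm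 u_i|^2}{N_0+\bar P_{\bar i}\,\bm u_{\bar i}^{H}\mathbf R_{i,\bar i}\bm u_{\bar i}}\right)\right],$$ the expectation being over $\bm h_{1,1},\bm h_{2,2}$. Problem (P2) is: maximize $\mathbb{E}[\tilde R_2]$ subject to $\mathbb{E}[\tilde R_1]\ge\tau_1$, $0\le\bar P_1\le P_1^{\max}$, $0\le\bar P_2\le P_2^{\max}$, $\|\bm u_1\|=\|\bm u_2\|=1$. *)

theory Defs
  imports "HOL-Analysis.Analysis" "HOL-Probability.Probability"
begin

definition herm_form :: "complex^'m^'m \<Rightarrow> complex^'m \<Rightarrow> complex^'m \<Rightarrow> complex" where
  "herm_form A x y = (\<Sum>i\<in>UNIV. \<Sum>j\<in>UNIV. cnj (x$i) * A$i$j * y$j)"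

definition cdot :: "complex^'m \<Rightarrow> complex^'m \<Rightarrow> complex" where
  "cdot x y = (\<Sum>i\<in>UNIV. cnj (x$i) * y$i)"

definition hermitian :: "complex^'m^'m \<Rightarrow> bool" where
  "hermitian A \<longleftrightarrow> (\<forall>i j. A$i$j = cnj (A$j$i))"

definition hermitian_pd :: "complex^'m^'m \<Rightarrow> bool" where
  "hermitian_pd A \<longleftrightarrow> hermitian A \<and> (\<forall>x. x \<noteq> 0 \<longrightarrow> Re (herm_form A x x) > 0)"

(* circularly-symmetric complex Gaussian CN(0,R) on C^M, via its density
   f(h) = exp(-h^H R^{-1} h) / (pi^M det R) w.r.t. Lebesgue measure on C^M = R^{2M} *)
definition CN :: "complex^'m^'m \<Rightarrow> (complex^'m) measure" where
  "CN R = density lborel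
     (\<lambda>h. ennreal (exp (- Re (herm_form (matrix_inv R) h h)) / (pi ^ CARD('m) * Re (det R))))"

definition ER1 ::
  "complex^'m^'m \<Rightarrow> complex^'n^'n \<Rightarrow> complex^'n^'n \<Rightarrow> real \<Rightarrow>
   real \<Rightarrow> (complex^'m \<Rightarrow> complex^'m) \<Rightarrow> real \<Rightarrow> (complex^'n \<Rightarrow> complex^'n) \<Rightarrow> real" where
  "ER1 R11 R22 R12 N0 P1 u1 P2 u2 =
     (\<integral>hh. log 2 (1 + P1 * (cmod (cdot (fst hh) (u1 (fst hh))))\<^sup>2
                     / (N0 + P2 * Re (herm_form R12 (u2 (snd hh)) (u2 (snd hh)))))
        \<partial>(CN R11 \<Otimes>\<^sub>M CN R22))"

definition ER2 ::
  "complex^'m^'m \<Rightarrow> complex^'n^'n \<Rightarrow> complex^'m^'m \<Rightarrow> real \<Rightarrow>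
   real \<Rightarrow> (complex^'m \<Rightarrow> complex^'m) \<Rightarrow> real \<Rightarrow> (complex^'n \<Rightarrow> complex^'n) \<Rightarrow> real" where
  "ER2 R11 R22 R21 N0 P1 u1 P2 u2 =
     (\<integral>hh. log 2 (1 + P2 * (cmod (cdot (snd hh) (u2 (snd hh))))\<^sup>2
                     / (N0 + P1 * Re (herm_form R21 (u1 (fst hh)) (u1 (fst hh)))))
        \<partial>(CN R11 \<Otimes>\<^sub>M CN R22))"

definition beamformer :: "complex^'m^'m \<Rightarrow> (complex^'m \<Rightarrow> complex^'m) \<Rightarrow> bool" where
  "beamformer R u \<longleftrightarrow> u \<in> borel_measurable borel \<and> (AE h in CN R. norm (u h) = 1)"

definition P2_feasible ::
  "complex^'m^'m \<Rightarrow> complex^'n^'n \<Rightarrow> complex^'n^'n \<Rightarrow> real \<Rightarrow> real \<Rightarrow> real \<Rightarrow> real \<Rightarrow>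
   real \<Rightarrow> (complex^'m \<Rightarrow> complex^'m) \<Rightarrow> real \<Rightarrow> (complex^'n \<Rightarrow> complex^'n) \<Rightarrow> bool" where
  "P2_feasible R11 R22 R12 N0 P1max P2max \<tau>1 P1 u1 P2 u2 \<longleftrightarrow>
     0 \<le> P1 \<and> P1 \<le> P1max \<and> 0 \<le> P2 \<and> P2 \<le> P2max \<and>
     beamformer R11 u1 \<and> beamformer R22 u2 \<and>
     ER1 R11 R22 R12 N0 P1 u1 P2 u2 \<ge> \<tau>1"

definition P2_optimal ::
  "complex^'m^'m \<Rightarrow> complex^'n^'n \<Rightarrow> complex^'n^'n \<Rightarrow> complex^'m^'m \<Rightarrow>
   real \<Rightarrow> real \<Rightarrow> real \<Rightarrow> real \<Rightarrow>
   real \<Rightarrow> (complex^'m \<Rightarrow> complex^'m) \<Rightarrow> real \<Rightarrow> (complex^'n \<Rightarrow> complex^'n) \<Rightarrow> bool" where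
  "P2_optimal R11 R22 R12 R21 N0 P1max P2max \<tau>1 P1 u1 P2 u2 \<longleftrightarrow>
     P2_feasible R11 R22 R12 N0 P1max P2max \<tau>1 P1 u1 P2 u2 \<and>
     (\<forall>P1' u1' P2' u2'. P2_feasible R11 R22 R12 N0 P1max P2max \<tau>1 P1' u1' P2' u2' \<longrightarrow>
        ER2 R11 R22 R21 N0 P1' u1' P2' u2' \<le> ER2 R11 R22 R21 N0 P1 u1 P2 u2)"

end

theory Submission
  imports Defs
begin

text \<open>Suppose both transmitters stay strictly below their power budgets. If the expected
  rate of link 2 is positive, scale both powers by the largest \<open>c > 1\<close> the budgets allow:
  as the noise power does not scale, every SINR increases, strictly wherever it is positive,
  so link 1 remains feasible while the expected rate of link 2 strictly increases. If the
  expected rate of link 2 is zero, let TX 1 use full power and TX 2 a small power along the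
  matched filter \<open>sgn h\<^sub>2\<^sub>2\<close>: the extra power of TX 1 compensates the new
  interference, and link 2 gets a positive rate because \<open>h\<^sub>2\<^sub>2 \<noteq> 0\<close> almost surely.
  The rates are integrable since the Gaussian densities decay faster than any logarithmic
  growth.\<close>

section \<open>Hermitian forms\<close>

lemma herm_form_eq_cdot: "herm_form A x y = cdot x (A *v y)"
  by (simp add: herm_form_def cdot_def matrix_vector_mult_def sum_distrib_left mult.assoc)

lemma herm_form_zero_left [simp]: "herm_form A 0 y = 0"
  by (simp add: herm_form_def)

lemma herm_form_scaleR: "herm_form A (c *\<^sub>R x) (c *\<^sub>R x) = c\<^sup>2 * herm_form A x x"
  by (simp add: herm_form_def sum_distrib_left power2_eq_square) (simp add: scaleR_conv_of_real ac_simps)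

lemma hermitian_cdot_mult_left:
  assumes "hermitian A"
  shows "cdot (A *v y) y = herm_form A y y"
proof -
  have "cdot (A *v y) y = (\<Sum>i\<in>UNIV. \<Sum>j\<in>UNIV. cnj (A$i$j) * cnj (y$j) * y$i)"
    by (simp add: cdot_def matrix_vector_mult_def sum_distrib_right)
  also have "\<dots> = (\<Sum>i\<in>UNIV. \<Sum>j\<in>UNIV. cnj (y$j) * A$j$i * y$i)"
    using assms unfolding hermitian_def
    by (intro sum.cong refl) (metis complex_cnj_cnj mult.commute)
  also have "\<dots> = herm_form A y y"
    unfolding herm_form_def by (rule sum.swap)
  finally show ?thesis .
qed

lemma hermitian_pd_nonneg: "hermitian_pd A \<Longrightarrow> 0 \<le> Re (herm_form A x x)"
  unfolding hermitian_pd_def by (cases "x = 0") (auto intro: less_imp_le)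

lemma hermitian_pd_invertible:
  assumes "hermitian_pd A"
  shows "invertible A"
proof -
  have "x = 0" if "A *v x = 0" for x
  proof -
    from that have "herm_form A x x = 0" by (simp add: herm_form_eq_cdot cdot_def)
    then show ?thesis using assms unfolding hermitian_pd_def by force
  qed
  then show ?thesis using matrix_left_invertible_ker invertible_left_inverse by blast
qed

lemma hermitian_pd_matrix_inv_pos:
  assumes A: "hermitian_pd A" and "x \<noteq> 0"
  shows "0 < Re (herm_form (matrix_inv A) x x)"
proof -
  have "A ** matrix_inv A = mat 1"
    using hermitian_pd_invertible[OF A] unfolding invertible_def matrix_inv_def
    by (metis (mono_tags, lifting) someI_ex)
  then have Ay: "A *v (matrix_inv A *v x) = x" by (simp add: matrix_vector_mul_assoc)
  define y where "y = matrix_inv A *v x"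
  have "y \<noteq> 0" using Ay \<open>x \<noteq> 0\<close> by (auto simp: y_def)
  have "herm_form (matrix_inv A) x x = cdot (A *v y) y"
    by (simp add: herm_form_eq_cdot Ay y_def)
  also have "\<dots> = herm_form A y y"
    using A by (simp add: hermitian_cdot_mult_left hermitian_pd_def)
  finally show ?thesis using \<open>y \<noteq> 0\<close> A unfolding hermitian_pd_def by auto
qed

lemma continuous_on_herm_form: "continuous_on UNIV (\<lambda>x. Re (herm_form A x x))"
  unfolding herm_form_def by (intro continuous_intros)

lemma borel_measurable_herm_form [measurable]: "(\<lambda>x. Re (herm_form A x x)) \<in> borel_measurable borel"
  by (rule borel_measurable_continuous_onI[OF continuous_on_herm_form])

text \<open>A quadratic form is homogeneous of degree two, so its extrema on the unit sphere
  (a compact set) bound it by multiples of the squared norm.\<close>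

lemma herm_form_sgn: "Re (herm_form A x x) = (norm x)\<^sup>2 * Re (herm_form A (sgn x) (sgn x))"
  by (cases "x = 0") (simp_all add: sgn_div_norm herm_form_scaleR power_divide)

lemma sphere_one_nonempty: "sphere (0 :: complex^'m) 1 \<noteq> {}"
  using vector_choose_size[of 1] by auto

lemma herm_form_ge_norm_sq:
  fixes A :: "complex^'m^'m"
  assumes "\<And>x. x \<noteq> 0 \<Longrightarrow> 0 < Re (herm_form A x x)"
  obtains l where "0 < l" "\<And>x. l * (norm x)\<^sup>2 \<le> Re (herm_form A x x)"
proof -
  obtain z :: "complex^'m" where z: "z \<in> sphere 0 1"
    and min: "\<forall>y\<in>sphere 0 1. Re (herm_form A z z) \<le> Re (herm_form A y y)"
    using continuous_attains_inf[OF compact_sphere sphere_one_nonempty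
        continuous_on_subset[OF continuous_on_herm_form subset_UNIV]] by blast
  show thesis
  proof
    show "0 < Re (herm_form A z z)" using z by (intro assms) auto
    show "Re (herm_form A z z) * (norm x)\<^sup>2 \<le> Re (herm_form A x x)" for x
    proof (cases "x = 0")
      case False
      then have "Re (herm_form A z z) \<le> Re (herm_form A (sgn x) (sgn x))"
        using min by (simp add: norm_sgn)
      then show ?thesis by (metis herm_form_sgn mult.commute mult_left_mono zero_le_power2)
    qed simp
  qed
qed

lemma herm_form_le_norm_sq:
  fixes A :: "complex^'m^'m"
  obtains L where "0 < L" "\<And>x. Re (herm_form A x x) \<le> L * (norm x)\<^sup>2"
proof -
  obtain z :: "complex^'m" where
    max: "\<forall>y\<in>sphere 0 1. Re (herm_form A y y) \<le> Re (herm_form A z z)"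
    using continuous_attains_sup[OF compact_sphere sphere_one_nonempty
        continuous_on_subset[OF continuous_on_herm_form subset_UNIV]] by blast
  define L where "L = max 1 (Re (herm_form A z z))"
  show thesis
  proof
    show "0 < L" by (simp add: L_def)
    show "Re (herm_form A x x) \<le> L * (norm x)\<^sup>2" for x
    proof (cases "x = 0")
      case False
      then have "Re (herm_form A (sgn x) (sgn x)) \<le> L"
        using max by (simp add: norm_sgn L_def le_max_iff_disj)
      then show ?thesis by (metis herm_form_sgn mult.commute mult_left_mono zero_le_power2)
    qed simp
  qed
qed

lemma cmod_cdot_le: "cmod (cdot x y) \<le> norm x * norm (y :: complex^'m)"
proof -
  have "cmod (cdot x y) \<le> (\<Sum>i\<in>UNIV. cmod (x$i) * cmod (y$i))"
    unfolding cdot_def by (rule order_trans[OF norm_sum]) (simp add: norm_mult)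
  also have "\<dots> \<le> L2_set (\<lambda>i. cmod (x$i)) UNIV * L2_set (\<lambda>i. cmod (y$i)) UNIV"
    using L2_set_mult_ineq[of "\<lambda>i. cmod (x$i)" "\<lambda>i. cmod (y$i)" UNIV] by simp
  also have "\<dots> = norm x * norm y" by (simp add: norm_vec_def)
  finally show ?thesis .
qed

lemma cdot_self: "cdot x x = of_real ((norm (x :: complex^'m))\<^sup>2)"
proof -
  have "cdot x x = of_real (\<Sum>i\<in>UNIV. (cmod (x$i))\<^sup>2)"
    unfolding cdot_def of_real_sum
    by (intro sum.cong refl) (metis complex_norm_square mult.commute of_real_power)
  then show ?thesis by (simp add: norm_vec_def L2_set_def sum_nonneg)
qed

lemma cmod_cdot_sgn: "cmod (cdot x (sgn x)) = norm (x :: complex^'m)"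
proof -
  have "cdot x (sgn x) = of_real (inverse (norm x)) * cdot x x"
    unfolding cdot_def sgn_div_norm vector_scaleR_component
    by (simp add: scaleR_conv_of_real sum_distrib_left ac_simps)
  then show ?thesis
    by (cases "x = 0") (simp_all add: cdot_self norm_mult norm_inverse power2_eq_square)
qed

lemma continuous_on_cdot: "continuous_on UNIV (\<lambda>p. cdot (fst p) (snd p :: complex^'m))"
  unfolding cdot_def by (intro continuous_intros)

section \<open>Integrability under the complex Gaussian distribution\<close>

lemma nn_integral_exp_neg_sq_finite:
  assumes "0 < l"
  shows "(\<integral>\<^sup>+x. ennreal (exp (- l * x\<^sup>2)) \<partial>lborel) < \<infinity>"
proof -
  define s where "s = sqrt (1 / (2 * l))"
  have "exp (- l * x\<^sup>2) = sqrt (pi / l) * normal_density 0 s x" for x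
    using assms by (simp add: normal_density_def s_def real_sqrt_divide field_simps)
  then have "(\<integral>\<^sup>+x. ennreal (exp (- l * x\<^sup>2)) \<partial>lborel)
      = (\<integral>\<^sup>+x. ennreal (sqrt (pi / l)) * ennreal (normal_density 0 s x) \<partial>lborel)"
    using assms by (intro nn_integral_cong) (simp add: ennreal_mult)
  also have "\<dots> = ennreal (sqrt (pi / l))"
    using assms
    by (simp add: nn_integral_cmult nn_integral_eq_integral integrable_normal_density
        integral_normal_density s_def)
  finally show ?thesis by simp
qed

lemma nn_integral_exp_neg_norm_sq_finite:
  assumes "0 < l"
  shows "(\<integral>\<^sup>+x. ennreal (exp (- l * (norm (x :: 'a::euclidean_space))\<^sup>2)) \<partial>lborel) < \<infinity>"
proof -
  have "(norm x)\<^sup>2 = (\<Sum>b\<in>Basis. (x \<bullet> b)\<^sup>2)" for x :: 'a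
    by (simp only: power2_norm_eq_inner) (simp add: euclidean_inner[of x x] power2_eq_square)
  then have "exp (- l * (norm x)\<^sup>2) = (\<Prod>b\<in>Basis. exp (- l * (x \<bullet> b)\<^sup>2))" for x :: 'a
    by (simp add: sum_distrib_left exp_sum[symmetric] sum_negf)
  then have "(\<integral>\<^sup>+x. ennreal (exp (- l * (norm (x :: 'a))\<^sup>2)) \<partial>lborel)
      = (\<integral>\<^sup>+x. (\<Prod>b\<in>Basis. ennreal (exp (- l * ((x :: 'a) \<bullet> b)\<^sup>2))) \<partial>lborel)"
    by (simp add: prod_ennreal)
  also have "\<dots> = (\<Prod>b\<in>(Basis :: 'a set). \<integral>\<^sup>+x. ennreal (exp (- l * x\<^sup>2)) \<partial>lborel)"
    by (rule nn_integral_lborel_prod) auto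
  also have "\<dots> < \<infinity>"
    using nn_integral_exp_neg_sq_finite[OF assms] by (simp add: power_less_top_ennreal)
  finally show ?thesis .
qed

lemma sets_CN [simp, measurable_cong]: "sets (CN R) = sets borel"
  by (simp add: CN_def)

lemma space_CN [simp]: "space (CN R) = UNIV"
  by (simp add: CN_def)

lemma AE_CN_nonzero: "AE h in CN R. h \<noteq> 0"
  unfolding CN_def using AE_lborel_singleton[of 0]
  by (subst AE_density) (auto elim: eventually_mono)

lemma CN_density_le_gaussian:
  fixes R :: "complex^'m^'m"
  assumes "hermitian_pd R"
  obtains l K where "0 < l" "0 \<le> K"
    "\<And>h. exp (- Re (herm_form (matrix_inv R) h h)) / (pi ^ CARD('m) * Re (det R))
          \<le> K * exp (- l * (norm h)\<^sup>2)"
proof -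
  obtain l where l: "0 < l" "\<And>h. l * (norm h)\<^sup>2 \<le> Re (herm_form (matrix_inv R) h h)"
    using herm_form_ge_norm_sq hermitian_pd_matrix_inv_pos[OF assms] by metis
  define D where "D = pi ^ CARD('m) * Re (det R)"
  have "exp (- Re (herm_form (matrix_inv R) h h)) / D \<le> max 0 (1 / D) * exp (- l * (norm h)\<^sup>2)" for h
  proof (cases "0 < D")
    case True
    then show ?thesis using l(2)[of h] by (simp add: divide_right_mono)
  next
    case False
    then show ?thesis by (simp add: divide_nonneg_nonpos)
  qed
  then show thesis using that[OF l(1), of "max 0 (1 / D)"] by (simp add: D_def)
qed

lemma integrable_CN_if_subgaussian:
  fixes R :: "complex^'m^'m" and f :: "complex^'m \<Rightarrow> real"
  assumes R: "hermitian_pd R" and [measurable]: "f \<in> borel_measurable borel"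
    and growth: "\<And>\<epsilon>. 0 < \<epsilon> \<Longrightarrow> \<exists>C. \<forall>h. \<bar>f h\<bar> \<le> C * exp (\<epsilon> * (norm h)\<^sup>2)"
  shows "integrable (CN R) f"
proof -
  define d where "d h = exp (- Re (herm_form (matrix_inv R) h h)) / (pi ^ CARD('m) * Re (det R))"
    for h :: "complex^'m"
  obtain l K where l: "0 < l" and K: "0 \<le> K" and d_le: "\<And>h. d h \<le> K * exp (- l * (norm h)\<^sup>2)"
    using CN_density_le_gaussian[OF R] unfolding d_def by metis
  obtain C where C: "\<And>h. \<bar>f h\<bar> \<le> C * exp (l / 2 * (norm h)\<^sup>2)"
    using growth[of "l / 2"] l by auto
  have pointwise: "d h * \<bar>f h\<bar> \<le> K * C * exp (- (l / 2) * (norm h)\<^sup>2)" for h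
  proof -
    have "d h * \<bar>f h\<bar> \<le> K * exp (- l * (norm h)\<^sup>2) * (C * exp (l / 2 * (norm h)\<^sup>2))"
      using d_le[of h] C[of h] K by (intro mult_mono) auto
    also have "\<dots> = K * C * exp (- (l / 2) * (norm h)\<^sup>2)"
      by (simp add: mult_ac exp_add[symmetric])
    finally show ?thesis .
  qed
  have "(\<integral>\<^sup>+h. ennreal (norm (f h)) \<partial>CN R) = (\<integral>\<^sup>+h. ennreal (d h) * ennreal \<bar>f h\<bar> \<partial>lborel)"
    unfolding CN_def d_def by (subst nn_integral_density) auto
  also have "\<dots> \<le> (\<integral>\<^sup>+h. ennreal (K * C) * ennreal (exp (- (l / 2) * (norm (h :: complex^'m))\<^sup>2)) \<partial>lborel)"
  proof (rule nn_integral_mono)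
    fix h :: "complex^'m"
    have "ennreal (d h) * ennreal \<bar>f h\<bar> = ennreal (d h * \<bar>f h\<bar>)"
      by (simp add: ennreal_mult'')
    also have "\<dots> \<le> ennreal (K * C * exp (- (l / 2) * (norm h)\<^sup>2))"
      using pointwise by (rule ennreal_leI)
    also have "\<dots> = ennreal (K * C) * ennreal (exp (- (l / 2) * (norm h)\<^sup>2))"
      by (simp add: ennreal_mult'')
    finally show "ennreal (d h) * ennreal \<bar>f h\<bar>
        \<le> ennreal (K * C) * ennreal (exp (- (l / 2) * (norm h)\<^sup>2))" .
  qed
  also have "\<dots> < \<infinity>"
    using nn_integral_exp_neg_norm_sq_finite[of "l / 2", where 'a="complex^'m"] l
    by (simp add: nn_integral_cmult ennreal_mult_less_top)
  finally show ?thesis by (intro integrableI_bounded) auto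
qed

lemma finite_measure_CN:
  assumes "hermitian_pd R"
  shows "finite_measure (CN R)"
proof -
  have "integrable (CN R) (\<lambda>_. 1 :: real)"
    using assms by (rule integrable_CN_if_subgaussian) (auto intro!: exI[of _ 1])
  then have "(\<integral>\<^sup>+h. 1 \<partial>CN R) < \<infinity>"
    by (simp add: integrable_iff_bounded)
  then show ?thesis by (intro finite_measureI) simp
qed

lemma sigma_finite_measure_CN: "hermitian_pd R \<Longrightarrow> sigma_finite_measure (CN R)"
  using finite_measure_CN by (auto simp: finite_measure_def)

lemma log2_one_plus_nonneg: "0 \<le> x \<Longrightarrow> 0 \<le> log 2 (1 + x)"
  by (subst zero_le_log_cancel_iff) auto

lemma log2_one_plus_pos_iff: "0 \<le> x \<Longrightarrow> 0 < log 2 (1 + x) \<longleftrightarrow> 0 < x"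
  by (subst zero_less_log_cancel_iff) auto

lemma log2_one_plus_mono: "0 \<le> x \<Longrightarrow> x \<le> y \<Longrightarrow> log 2 (1 + x) \<le> log 2 (1 + y)"
  by simp

lemma log2_one_plus_strict_mono: "0 \<le> x \<Longrightarrow> x < y \<Longrightarrow> log 2 (1 + x) < log 2 (1 + y)"
  by simp

lemma integrable_CN_log:
  assumes "hermitian_pd R" "0 \<le> a"
  shows "integrable (CN R) (\<lambda>h. log 2 (1 + a * (norm h)\<^sup>2))"
proof (rule integrable_CN_if_subgaussian[OF assms(1)])
  fix \<epsilon> :: real assume "0 < \<epsilon>"
  have "log 2 (1 + a * s) \<le> a / (\<epsilon> * ln 2) * exp (\<epsilon> * s)" if "0 \<le> s" for s
  proof -
    have "ln (1 + a * s) \<le> a * s" using assms that by (intro ln_add_one_self_le_self) auto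
    then have "log 2 (1 + a * s) \<le> a / (\<epsilon> * ln 2) * (\<epsilon> * s)"
      using \<open>0 < \<epsilon>\<close> by (simp add: log_def divide_right_mono)
    also have "\<dots> \<le> a / (\<epsilon> * ln 2) * exp (\<epsilon> * s)"
      using assms \<open>0 < \<epsilon>\<close> exp_ge_add_one_self[of "\<epsilon> * s"]
      by (intro mult_left_mono) (linarith, simp)
    finally show ?thesis .
  qed
  moreover have "0 \<le> log 2 (1 + a * s)" if "0 \<le> s" for s
    using assms that by (intro log2_one_plus_nonneg) simp
  ultimately show "\<exists>C. \<forall>h. \<bar>log 2 (1 + a * (norm h)\<^sup>2)\<bar> \<le> C * exp (\<epsilon> * (norm h)\<^sup>2)"
    by (metis abs_of_nonneg zero_le_power2)
qed measurable

section \<open>Product measures and integrals\<close>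

lemma AE_pair_measure_fst:
  assumes "sigma_finite_measure M2" "AE x in M1. P x"
  shows "AE z in M1 \<Otimes>\<^sub>M M2. P (fst z)"
proof -
  interpret M2: sigma_finite_measure M2 by fact
  obtain N where N: "{x \<in> space M1. \<not> P x} \<subseteq> N" "N \<in> null_sets M1"
    using assms(2) unfolding eventually_ae_filter by blast
  show ?thesis
  proof (rule AE_I[of _ _ "N \<times> space M2"])
    show "{z \<in> space (M1 \<Otimes>\<^sub>M M2). \<not> P (fst z)} \<subseteq> N \<times> space M2"
      using N(1) by (auto simp: space_pair_measure)
    show "emeasure (M1 \<Otimes>\<^sub>M M2) (N \<times> space M2) = 0"
      using N(2) by (subst M2.emeasure_pair_measure_Times) auto
  qed (use N(2) in auto)
qed

lemma AE_pair_measure_snd: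
  assumes "sigma_finite_measure M2" "AE y in M2. P y"
  shows "AE z in M1 \<Otimes>\<^sub>M M2. P (snd z)"
proof -
  interpret M2: sigma_finite_measure M2 by fact
  obtain N where N: "{y \<in> space M2. \<not> P y} \<subseteq> N" "N \<in> null_sets M2"
    using assms(2) unfolding eventually_ae_filter by blast
  show ?thesis
  proof (rule AE_I[of _ _ "space M1 \<times> N"])
    show "{z \<in> space (M1 \<Otimes>\<^sub>M M2). \<not> P (snd z)} \<subseteq> space M1 \<times> N"
      using N(1) by (auto simp: space_pair_measure)
    show "emeasure (M1 \<Otimes>\<^sub>M M2) (space M1 \<times> N) = 0"
      using N(2) by (subst M2.emeasure_pair_measure_Times) auto
  qed (use N(2) in auto)
qed

lemma integrable_pair_measure_fst:
  fixes g :: "_ \<Rightarrow> real"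
  assumes "finite_measure M2" "integrable M1 g"
  shows "integrable (M1 \<Otimes>\<^sub>M M2) (\<lambda>z. g (fst z))"
proof -
  interpret M2: finite_measure M2 by fact
  have [measurable]: "g \<in> borel_measurable M1" using assms(2) by auto
  have "(\<integral>\<^sup>+z. ennreal (norm (g (fst z))) \<partial>(M1 \<Otimes>\<^sub>M M2))
      = (\<integral>\<^sup>+x. ennreal (norm (g x)) * emeasure M2 (space M2) \<partial>M1)"
    by (subst M2.nn_integral_fst[symmetric]) (simp_all add: nn_integral_const)
  also have "\<dots> = (\<integral>\<^sup>+x. ennreal (norm (g x)) \<partial>M1) * emeasure M2 (space M2)"
    by (simp add: nn_integral_multc)
  also have "\<dots> < \<infinity>"
    using assms(2) M2.emeasure_finite[of "space M2"]
    by (simp add: integrable_iff_bounded ennreal_mult_eq_top_iff less_top[symmetric])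
  finally show ?thesis by (intro integrableI_bounded) auto
qed

lemma integrable_pair_measure_snd:
  fixes g :: "_ \<Rightarrow> real"
  assumes "finite_measure M1" "sigma_finite_measure M2" "integrable M2 g"
  shows "integrable (M1 \<Otimes>\<^sub>M M2) (\<lambda>z. g (snd z))"
proof -
  interpret M1: finite_measure M1 by fact
  interpret M2: sigma_finite_measure M2 by fact
  have [measurable]: "g \<in> borel_measurable M2" using assms(3) by auto
  have "(\<integral>\<^sup>+z. ennreal (norm (g (snd z))) \<partial>(M1 \<Otimes>\<^sub>M M2))
      = (\<integral>\<^sup>+y. ennreal (norm (g y)) \<partial>M2) * emeasure M1 (space M1)"
    by (subst M2.nn_integral_fst[symmetric]) (simp_all add: nn_integral_const)
  also have "\<dots> < \<infinity>"
    using assms(3) M1.emeasure_finite[of "space M1"]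
    by (simp add: integrable_iff_bounded ennreal_mult_eq_top_iff less_top[symmetric])
  finally show ?thesis by (intro integrableI_bounded) auto
qed

lemma emeasure_space_neq_0_if_integral_neq_0:
  fixes f :: "_ \<Rightarrow> real"
  assumes "integral\<^sup>L M f \<noteq> 0"
  shows "emeasure M (space M) \<noteq> 0"
proof
  assume "emeasure M (space M) = 0"
  then have "AE x in M. f x = 0" by (intro AE_I[of _ _ "space M"]) auto
  then have "integral\<^sup>L M f = 0" by (simp add: integral_eq_zero_AE)
  with assms show False ..
qed

lemma (in finite_measure) integrable_if_nonneg_le_shift:
  fixes f g :: "_ \<Rightarrow> real"
  assumes "integrable M f" "g \<in> borel_measurable M" "AE x in M. 0 \<le> g x \<and> g x \<le> c + f x"
  shows "integrable M g"
proof (rule Bochner_Integration.integrable_bound[of _ "\<lambda>x. c + f x"])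
  show "AE x in M. norm (g x) \<le> norm (c + f x)"
    using assms(3) by eventually_elim auto
qed (use assms in auto)

lemma integral_less_if_less_on_support:
  fixes f g :: "_ \<Rightarrow> real"
  assumes f: "integrable M f" and g: "integrable M g"
    and nonneg: "\<And>x. x \<in> space M \<Longrightarrow> 0 \<le> f x" and le: "\<And>x. x \<in> space M \<Longrightarrow> f x \<le> g x"
    and less: "\<And>x. x \<in> space M \<Longrightarrow> 0 < f x \<Longrightarrow> f x < g x"
    and pos: "0 < integral\<^sup>L M f"
  shows "integral\<^sup>L M f < integral\<^sup>L M g"
proof (rule ccontr)
  assume "\<not> ?thesis"
  then have "integral\<^sup>L M (\<lambda>x. g x - f x) = 0"
    using integral_mono[OF f g le] f g by simp
  then have "AE x in M. g x - f x = 0"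
    using f g le by (subst integral_nonneg_eq_0_iff_AE[symmetric]) auto
  with AE_space have "AE x in M. f x = 0"
    by eventually_elim (use nonneg less in force)
  then have "integral\<^sup>L M f = 0" by (simp add: integral_eq_zero_AE)
  with pos show False by simp
qed

section \<open>Rates of an interfered link\<close>

definition sinr_rate :: "real \<Rightarrow> real \<Rightarrow> real \<Rightarrow> real \<Rightarrow> real \<Rightarrow> real" where
  "sinr_rate N0 P g Q q = log 2 (1 + P * g / (N0 + Q * q))"

context
  fixes N0 P g Q q :: real
  assumes N0: "0 < N0" and nonneg: "0 \<le> P" "0 \<le> g" "0 \<le> Q" "0 \<le> q"
begin

lemma noise_plus_interference_pos: "0 < N0 + Q * q"
  using N0 nonneg by (simp add: add_pos_nonneg)

lemma sinr_nonneg: "0 \<le> P * g / (N0 + Q * q)"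
  using noise_plus_interference_pos nonneg by simp

lemma sinr_rate_nonneg: "0 \<le> sinr_rate N0 P g Q q"
  unfolding sinr_rate_def using sinr_nonneg by (rule log2_one_plus_nonneg)

lemma sinr_rate_pos_iff: "0 < sinr_rate N0 P g Q q \<longleftrightarrow> 0 < P * g"
  unfolding sinr_rate_def using noise_plus_interference_pos sinr_nonneg
  by (simp add: log2_one_plus_pos_iff zero_less_divide_iff)

lemma sinr_rate_le_scaled:
  assumes "1 \<le> c"
  shows "sinr_rate N0 P g Q q \<le> sinr_rate N0 (c * P) g (c * Q) q"
proof -
  have "P * g / (N0 + Q * q) \<le> P * g / (N0 / c + Q * q)"
    using assms N0 nonneg by (intro divide_left_mono) (auto simp: add_pos_nonneg divide_le_eq)
  also have "\<dots> = c * P * g / (N0 + c * Q * q)"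
    using assms by (simp add: field_simps)
  finally show ?thesis unfolding sinr_rate_def by (rule log2_one_plus_mono[OF sinr_nonneg])
qed

lemma sinr_rate_less_scaled:
  assumes "1 < c" "0 < sinr_rate N0 P g Q q"
  shows "sinr_rate N0 P g Q q < sinr_rate N0 (c * P) g (c * Q) q"
proof -
  have "P * g / (N0 + Q * q) < P * g / (N0 / c + Q * q)"
    using assms N0 nonneg sinr_rate_pos_iff
    by (intro divide_strict_left_mono) (auto simp: add_pos_nonneg divide_less_eq)
  also have "\<dots> = c * P * g / (N0 + c * Q * q)"
    using assms by (simp add: field_simps)
  finally show ?thesis unfolding sinr_rate_def by (rule log2_one_plus_strict_mono[OF sinr_nonneg])
qed

lemma sinr_rate_scaled_le:
  assumes "1 \<le> c"
  shows "sinr_rate N0 (c * P) g (c * Q) q \<le> log 2 c + sinr_rate N0 P g Q q"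
proof -
  have "c * P * g / (N0 + c * Q * q) \<le> c * P * g / (N0 + Q * q)"
    using assms nonneg noise_plus_interference_pos mult_right_mono[of 1 c "Q * q"]
    by (intro divide_left_mono) auto
  then have "1 + c * P * g / (N0 + c * Q * q) \<le> c * (1 + P * g / (N0 + Q * q))"
    using assms by (simp add: algebra_simps)
  then have "sinr_rate N0 (c * P) g (c * Q) q \<le> log 2 (c * (1 + P * g / (N0 + Q * q)))"
    unfolding sinr_rate_def using assms nonneg N0
    by (simp add: add_pos_nonneg)
  also have "\<dots> = log 2 c + sinr_rate N0 P g Q q"
    unfolding sinr_rate_def using assms sinr_nonneg by (simp add: log_mult add_pos_nonneg)
  finally show ?thesis .
qed

lemma sinr_rate_le_snr_rate:
  assumes "g \<le> G"
  shows "sinr_rate N0 P g Q q \<le> log 2 (1 + P / N0 * G)"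
proof -
  have "P * g / (N0 + Q * q) \<le> P * g / N0"
    using N0 noise_plus_interference_pos nonneg by (intro divide_left_mono) auto
  also have "\<dots> \<le> P / N0 * G"
    using N0 nonneg assms by (simp add: divide_right_mono mult_left_mono)
  finally show ?thesis unfolding sinr_rate_def by (rule log2_one_plus_mono[OF sinr_nonneg])
qed

lemma sinr_rate_le_less_interference:
  assumes "0 \<le> Q' * q'" "P * (N0 + Q' * q') \<le> P' * N0"
  shows "sinr_rate N0 P g Q q \<le> sinr_rate N0 P' g Q' q'"
proof -
  have "P * g / (N0 + Q * q) \<le> P * g / N0"
    using N0 noise_plus_interference_pos nonneg by (intro divide_left_mono) auto
  also have "\<dots> \<le> P' * g / (N0 + Q' * q')"
    using N0 nonneg assms mult_right_mono[OF assms(2), of g]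
    by (simp add: divide_le_eq le_divide_eq add_pos_nonneg mult_ac)
  finally show ?thesis unfolding sinr_rate_def by (rule log2_one_plus_mono[OF sinr_nonneg])
qed

end

section \<open>The two-link interference channel\<close>

lemma beamformer_sgn: "beamformer R sgn"
  unfolding beamformer_def using AE_CN_nonzero by (auto simp: norm_sgn elim: eventually_mono)

locale interference_channel =
  fixes R11 R21 :: "complex^'m^'m" and R22 R12 :: "complex^'n^'n" and N0 :: real
  assumes pd11: "hermitian_pd R11" and pd12: "hermitian_pd R12"
    and pd21: "hermitian_pd R21" and pd22: "hermitian_pd R22"
    and N0_pos: "0 < N0"
begin

abbreviation channels :: "((complex^'m) \<times> (complex^'n)) measure" where
  "channels \<equiv> CN R11 \<Otimes>\<^sub>M CN R22"

definition rate1 ::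
  "real \<Rightarrow> (complex^'m \<Rightarrow> complex^'m) \<Rightarrow> real \<Rightarrow> (complex^'n \<Rightarrow> complex^'n) \<Rightarrow>
   (complex^'m) \<times> (complex^'n) \<Rightarrow> real" where
  "rate1 P1 u1 P2 u2 hh = sinr_rate N0 P1 ((cmod (cdot (fst hh) (u1 (fst hh))))\<^sup>2)
     P2 (Re (herm_form R12 (u2 (snd hh)) (u2 (snd hh))))"

definition rate2 ::
  "real \<Rightarrow> (complex^'m \<Rightarrow> complex^'m) \<Rightarrow> real \<Rightarrow> (complex^'n \<Rightarrow> complex^'n) \<Rightarrow>
   (complex^'m) \<times> (complex^'n) \<Rightarrow> real" where
  "rate2 P1 u1 P2 u2 hh = sinr_rate N0 P2 ((cmod (cdot (snd hh) (u2 (snd hh))))\<^sup>2)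
     P1 (Re (herm_form R21 (u1 (fst hh)) (u1 (fst hh))))"

lemma ER1_eq_integral: "ER1 R11 R22 R12 N0 P1 u1 P2 u2 = integral\<^sup>L channels (rate1 P1 u1 P2 u2)"
  unfolding ER1_def rate1_def[abs_def] sinr_rate_def by simp

lemma ER2_eq_integral: "ER2 R11 R22 R21 N0 P1 u1 P2 u2 = integral\<^sup>L channels (rate2 P1 u1 P2 u2)"
  unfolding ER2_def rate2_def[abs_def] sinr_rate_def by simp

lemma finite_measure_channels: "finite_measure channels"
  using finite_measure_pair_measure[OF finite_measure_CN[OF pd22] finite_measure_CN[OF pd11]] .

lemma rate_measurable:
  assumes [measurable]: "u1 \<in> borel_measurable borel" "u2 \<in> borel_measurable borel"
  shows "rate1 P1 u1 P2 u2 \<in> borel_measurable channels" "rate2 P1 u1 P2 u2 \<in> borel_measurable channels"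
proof -
  have [measurable]: "(\<lambda>hh. cdot (fst hh) (u1 (fst hh))) \<in> borel_measurable channels"
    by (rule borel_measurable_continuous_Pair[OF _ _ continuous_on_cdot]) measurable
  have [measurable]: "(\<lambda>hh. cdot (snd hh) (u2 (snd hh))) \<in> borel_measurable channels"
    by (rule borel_measurable_continuous_Pair[OF _ _ continuous_on_cdot]) measurable
  have [measurable]: "(\<lambda>hh. Re (herm_form R12 (u2 (snd hh)) (u2 (snd hh)))) \<in> borel_measurable channels"
    using measurable_compose[OF _ borel_measurable_herm_form, of "\<lambda>hh. u2 (snd hh)"] by measurable
  have [measurable]: "(\<lambda>hh. Re (herm_form R21 (u1 (fst hh)) (u1 (fst hh)))) \<in> borel_measurable channels"
    using measurable_compose[OF _ borel_measurable_herm_form, of "\<lambda>hh. u1 (fst hh)"] by measurable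
  show "rate1 P1 u1 P2 u2 \<in> borel_measurable channels"
    unfolding rate1_def[abs_def] sinr_rate_def by measurable
  show "rate2 P1 u1 P2 u2 \<in> borel_measurable channels"
    unfolding rate2_def[abs_def] sinr_rate_def by measurable
qed

lemma rate1_nonneg: "0 \<le> P1 \<Longrightarrow> 0 \<le> P2 \<Longrightarrow> 0 \<le> rate1 P1 u1 P2 u2 hh"
  unfolding rate1_def by (rule sinr_rate_nonneg) (use N0_pos hermitian_pd_nonneg[OF pd12] in auto)

lemma rate2_nonneg: "0 \<le> P1 \<Longrightarrow> 0 \<le> P2 \<Longrightarrow> 0 \<le> rate2 P1 u1 P2 u2 hh"
  unfolding rate2_def by (rule sinr_rate_nonneg) (use N0_pos hermitian_pd_nonneg[OF pd21] in auto)

lemma rate1_zero_power [simp]: "rate1 0 u1 P2 u2 = (\<lambda>_. 0)"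
  by (simp add: rate1_def sinr_rate_def fun_eq_iff)

lemma rate2_zero_power [simp]: "rate2 P1 u1 0 u2 = (\<lambda>_. 0)"
  by (simp add: rate2_def sinr_rate_def fun_eq_iff)

lemma feasible_imp_integrable_rate1:
  assumes "P2_feasible R11 R22 R12 N0 Pm1 Pm2 \<tau> P1 u1 P2 u2" "0 < \<tau>"
  shows "integrable channels (rate1 P1 u1 P2 u2)"
  using assms not_integrable_integral_eq by (fastforce simp: P2_feasible_def ER1_eq_integral)

lemma feasible_imp_power1_pos:
  assumes "P2_feasible R11 R22 R12 N0 Pm1 Pm2 \<tau> P1 u1 P2 u2" "0 < \<tau>"
  shows "0 < P1"
  using assms by (cases "P1 = 0") (auto simp: P2_feasible_def ER1_eq_integral)

lemma feasible_imp_channels_nonzero: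
  assumes "P2_feasible R11 R22 R12 N0 Pm1 Pm2 \<tau> P1 u1 P2 u2" "0 < \<tau>"
  shows "emeasure channels (space channels) \<noteq> 0"
  using assms by (intro emeasure_space_neq_0_if_integral_neq_0[of _ "rate1 P1 u1 P2 u2"])
    (auto simp: P2_feasible_def ER1_eq_integral)

text \<open>Scaling both powers by \<open>c \<ge> 1\<close> multiplies every SINR by at most \<open>c\<close>, so the
  scaled rates exceed the old ones by at most \<open>log 2 c\<close> and stay integrable.\<close>

lemma feasible_scale_powers:
  assumes feas: "P2_feasible R11 R22 R12 N0 Pm1 Pm2 \<tau> P1 u1 P2 u2" and "0 < \<tau>"
    and c: "1 \<le> c" "c * P1 \<le> Pm1" "c * P2 \<le> Pm2"
  shows "P2_feasible R11 R22 R12 N0 Pm1 Pm2 \<tau> (c * P1) u1 (c * P2) u2"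
proof -
  interpret finite_measure channels by (rule finite_measure_channels)
  have P: "0 \<le> P1" "0 \<le> P2" and u: "beamformer R11 u1" "beamformer R22 u2"
    and ER1: "\<tau> \<le> integral\<^sup>L channels (rate1 P1 u1 P2 u2)"
    using feas by (auto simp: P2_feasible_def ER1_eq_integral)
  have gains: "0 \<le> (cmod z)\<^sup>2" "0 \<le> Re (herm_form R12 v v)" for z v
    using hermitian_pd_nonneg[OF pd12] by auto
  have int: "integrable channels (rate1 P1 u1 P2 u2)"
    using feasible_imp_integrable_rate1[OF feas \<open>0 < \<tau>\<close>] .
  have le: "rate1 P1 u1 P2 u2 hh \<le> rate1 (c * P1) u1 (c * P2) u2 hh" for hh
    unfolding rate1_def using N0_pos P gains c by (intro sinr_rate_le_scaled) auto
  have "integrable channels (rate1 (c * P1) u1 (c * P2) u2)"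
  proof (rule integrable_if_nonneg_le_shift[OF int])
    show "rate1 (c * P1) u1 (c * P2) u2 \<in> borel_measurable channels"
      using u by (auto simp: beamformer_def intro: rate_measurable)
    show "AE hh in channels. 0 \<le> rate1 (c * P1) u1 (c * P2) u2 hh
        \<and> rate1 (c * P1) u1 (c * P2) u2 hh \<le> log 2 c + rate1 P1 u1 P2 u2 hh"
      unfolding rate1_def using N0_pos P gains c
      by (intro AE_I2 conjI sinr_rate_nonneg sinr_rate_scaled_le) auto
  qed
  then have "\<tau> \<le> integral\<^sup>L channels (rate1 (c * P1) u1 (c * P2) u2)"
    using ER1 int le by (meson integral_mono order_trans)
  then show ?thesis
    using feas c P by (auto simp: P2_feasible_def ER1_eq_integral)
qed

lemma ER2_less_scale_powers:
  assumes u: "beamformer R11 u1" "beamformer R22 u2" and P: "0 \<le> P1" "0 \<le> P2"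
    and c: "1 < c" and pos: "0 < ER2 R11 R22 R21 N0 P1 u1 P2 u2"
  shows "ER2 R11 R22 R21 N0 P1 u1 P2 u2 < ER2 R11 R22 R21 N0 (c * P1) u1 (c * P2) u2"
proof -
  interpret finite_measure channels by (rule finite_measure_channels)
  have gains: "0 \<le> (cmod z)\<^sup>2" "0 \<le> Re (herm_form R21 v v)" for z v
    using hermitian_pd_nonneg[OF pd21] by auto
  have int: "integrable channels (rate2 P1 u1 P2 u2)"
    using pos not_integrable_integral_eq by (fastforce simp: ER2_eq_integral)
  have "integrable channels (rate2 (c * P1) u1 (c * P2) u2)"
  proof (rule integrable_if_nonneg_le_shift[OF int])
    show "rate2 (c * P1) u1 (c * P2) u2 \<in> borel_measurable channels"
      using u by (auto simp: beamformer_def intro: rate_measurable)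
    show "AE hh in channels. 0 \<le> rate2 (c * P1) u1 (c * P2) u2 hh
        \<and> rate2 (c * P1) u1 (c * P2) u2 hh \<le> log 2 c + rate2 P1 u1 P2 u2 hh"
      unfolding rate2_def using N0_pos P gains c
      by (intro AE_I2 conjI sinr_rate_nonneg sinr_rate_scaled_le) auto
  qed
  then show ?thesis
    unfolding ER2_eq_integral
  proof (rule integral_less_if_less_on_support[OF int])
    show "0 \<le> rate2 P1 u1 P2 u2 hh" for hh using rate2_nonneg P .
    show "rate2 P1 u1 P2 u2 hh \<le> rate2 (c * P1) u1 (c * P2) u2 hh" for hh
      unfolding rate2_def using N0_pos P gains c by (intro sinr_rate_le_scaled) auto
    show "rate2 P1 u1 P2 u2 hh < rate2 (c * P1) u1 (c * P2) u2 hh"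
      if "0 < rate2 P1 u1 P2 u2 hh" for hh
      using that unfolding rate2_def using N0_pos P gains c by (intro sinr_rate_less_scaled) auto
  qed (use pos in \<open>simp add: ER2_eq_integral\<close>)
qed

text \<open>When TX 1 is below full power it can absorb any interference from a weak
  transmission of TX 2 by raising its own power.\<close>

lemma feasible_full_power_matched_filter:
  assumes feas: "P2_feasible R11 R22 R12 N0 Pm1 Pm2 \<tau> P1 u1 P2 u2" and "0 < \<tau>"
    and "P1 < Pm1" "0 < Pm2"
  obtains Q where "0 < Q" "P2_feasible R11 R22 R12 N0 Pm1 Pm2 \<tau> Pm1 u1 Q sgn"
proof -
  interpret finite_measure channels by (rule finite_measure_channels)
  have P1: "0 < P1" using feasible_imp_power1_pos[OF feas \<open>0 < \<tau>\<close>] .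
  have P2: "0 \<le> P2" and u1: "beamformer R11 u1"
    and ER1: "\<tau> \<le> integral\<^sup>L channels (rate1 P1 u1 P2 u2)"
    using feas by (auto simp: P2_feasible_def ER1_eq_integral)
  obtain L where L: "0 < L" "\<And>x. Re (herm_form R12 x x) \<le> L * (norm x)\<^sup>2"
    using herm_form_le_norm_sq by blast
  define Q where "Q = min Pm2 ((Pm1 - P1) * N0 / (P1 * L))"
  have "Q \<le> (Pm1 - P1) * N0 / (P1 * L)" by (simp add: Q_def)
  then have "Q * (P1 * L) \<le> (Pm1 - P1) * N0"
    using P1 L by (simp add: pos_le_divide_eq)
  moreover have "0 < Q"
    using P1 L \<open>P1 < Pm1\<close> \<open>0 < Pm2\<close> N0_pos unfolding Q_def by (simp add: field_simps)
  ultimately have Q: "0 < Q" "Q \<le> Pm2" "P1 * (Q * L) \<le> (Pm1 - P1) * N0"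
    by (simp_all add: Q_def mult_ac)
  have interference: "0 \<le> Re (herm_form R12 (sgn v) (sgn v))" "Re (herm_form R12 (sgn v) (sgn v)) \<le> L"
    for v :: "complex^'n"
    using hermitian_pd_nonneg[OF pd12] L(2)[of "sgn v"] L(1) by (auto simp: norm_sgn split: if_splits)
  have le: "rate1 P1 u1 P2 u2 hh \<le> rate1 Pm1 u1 Q sgn hh" for hh
    unfolding rate1_def
  proof (rule sinr_rate_le_less_interference)
    have "P1 * (Q * Re (herm_form R12 (sgn (snd hh)) (sgn (snd hh)))) \<le> P1 * (Q * L)"
      using P1 Q interference by (intro mult_left_mono) auto
    then show "P1 * (N0 + Q * Re (herm_form R12 (sgn (snd hh)) (sgn (snd hh)))) \<le> Pm1 * N0"
      using Q by (simp add: algebra_simps)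
  qed (use N0_pos P1 P2 Q interference hermitian_pd_nonneg[OF pd12] in auto)
  have "integrable channels (rate1 Pm1 u1 Q sgn)"
  proof (rule integrable_if_nonneg_le_shift[where c = 0])
    show "integrable channels (\<lambda>hh. log 2 (1 + Pm1 / N0 * (norm (fst hh))\<^sup>2))"
      using integrable_CN_log[OF pd11, of "Pm1 / N0"] P1 \<open>P1 < Pm1\<close> N0_pos
      by (intro integrable_pair_measure_fst finite_measure_CN[OF pd22]) auto
    show "rate1 Pm1 u1 Q sgn \<in> borel_measurable channels"
      using u1 by (auto simp: beamformer_def intro: rate_measurable)
    have "AE hh in channels. norm (u1 (fst hh)) = 1"
      using u1 by (intro AE_pair_measure_fst sigma_finite_measure_CN[OF pd22]) (simp add: beamformer_def)
    then show "AE hh in channels. 0 \<le> rate1 Pm1 u1 Q sgn hh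
        \<and> rate1 Pm1 u1 Q sgn hh \<le> 0 + log 2 (1 + Pm1 / N0 * (norm (fst hh))\<^sup>2)"
    proof eventually_elim
      case (elim hh)
      then have "(cmod (cdot (fst hh) (u1 (fst hh))))\<^sup>2 \<le> (norm (fst hh))\<^sup>2"
        using cmod_cdot_le[of "fst hh" "u1 (fst hh)"] by (simp add: power_mono)
      then have "rate1 Pm1 u1 Q sgn hh \<le> log 2 (1 + Pm1 / N0 * (norm (fst hh))\<^sup>2)"
        unfolding rate1_def using N0_pos P1 \<open>P1 < Pm1\<close> Q interference
        by (intro sinr_rate_le_snr_rate) auto
      moreover have "0 \<le> rate1 Pm1 u1 Q sgn hh"
        using rate1_nonneg P1 \<open>P1 < Pm1\<close> Q by simp
      ultimately show ?case by simp
    qed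
  qed
  then have "\<tau> \<le> integral\<^sup>L channels (rate1 Pm1 u1 Q sgn)"
    using ER1 feasible_imp_integrable_rate1[OF feas \<open>0 < \<tau>\<close>] le by (meson integral_mono order_trans)
  then show thesis
    using that Q P1 \<open>P1 < Pm1\<close> u1 beamformer_sgn by (auto simp: P2_feasible_def ER1_eq_integral)
qed

lemma ER2_pos_matched_filter:
  assumes u1: "beamformer R11 u1" and "0 \<le> P1" "0 < Q"
    and nonzero: "emeasure channels (space channels) \<noteq> 0"
  shows "0 < ER2 R11 R22 R21 N0 P1 u1 Q sgn"
proof -
  interpret finite_measure channels by (rule finite_measure_channels)
  have interference: "0 \<le> Re (herm_form R21 v v)" for v
    using hermitian_pd_nonneg[OF pd21] .
  have rate2_eq: "rate2 P1 u1 Q sgn hh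
      = sinr_rate N0 Q ((norm (snd hh))\<^sup>2) P1 (Re (herm_form R21 (u1 (fst hh)) (u1 (fst hh))))" for hh
    by (simp add: rate2_def cmod_cdot_sgn)
  have "integrable channels (rate2 P1 u1 Q sgn)"
  proof (rule integrable_if_nonneg_le_shift[where c = 0])
    show "integrable channels (\<lambda>hh. log 2 (1 + Q / N0 * (norm (snd hh))\<^sup>2))"
      using integrable_CN_log[OF pd22, of "Q / N0"] \<open>0 < Q\<close> N0_pos
      by (intro integrable_pair_measure_snd finite_measure_CN[OF pd11] sigma_finite_measure_CN[OF pd22])
        auto
    show "rate2 P1 u1 Q sgn \<in> borel_measurable channels"
      using u1 by (auto simp: beamformer_def intro: rate_measurable)
    have "0 \<le> rate2 P1 u1 Q sgn hh \<and> rate2 P1 u1 Q sgn hh \<le> log 2 (1 + Q / N0 * (norm (snd hh))\<^sup>2)"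
      for hh
      unfolding rate2_eq using N0_pos \<open>0 \<le> P1\<close> \<open>0 < Q\<close> interference
      by (intro conjI sinr_rate_nonneg sinr_rate_le_snr_rate) auto
    then show "AE hh in channels. 0 \<le> rate2 P1 u1 Q sgn hh
        \<and> rate2 P1 u1 Q sgn hh \<le> 0 + log 2 (1 + Q / N0 * (norm (snd hh))\<^sup>2)"
      by simp
  qed
  moreover have "AE hh in channels. 0 < rate2 P1 u1 Q sgn hh"
    using AE_pair_measure_snd[OF sigma_finite_measure_CN[OF pd22] AE_CN_nonzero]
  proof eventually_elim
    case (elim hh)
    then show ?case
      unfolding rate2_eq using N0_pos \<open>0 \<le> P1\<close> \<open>0 < Q\<close> interference
      by (subst sinr_rate_pos_iff) auto
  qed
  ultimately show ?thesis
    using integral_less_AE_space[of "\<lambda>_. 0"] nonzero by (simp add: ER2_eq_integral)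
qed

end

theorem proposition2:
  fixes R11 R21 :: "complex^'m^'m" and R22 R12 :: "complex^'n^'n"
    and N0 P1max P2max \<tau>1 P1 P2 :: real
    and u1 :: "complex^'m \<Rightarrow> complex^'m" and u2 :: "complex^'n \<Rightarrow> complex^'n"
  assumes "hermitian_pd R11" "hermitian_pd R12" "hermitian_pd R21" "hermitian_pd R22"
    and "N0 > 0" "P1max > 0" "P2max > 0" "\<tau>1 > 0"
    and "(\<integral>h. log 2 (1 + P1max * (norm h)\<^sup>2 / N0) \<partial>CN R11) \<ge> \<tau>1"
    and "P2_optimal R11 R22 R12 R21 N0 P1max P2max \<tau>1 P1 u1 P2 u2"
  shows "P1 = P1max \<or> P2 = P2max"
\<comment> \<open>hypothesis 9 only guarantees that (P2) is feasible; the implication does not need it\<close>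
proof (rule ccontr)
  interpret interference_channel R11 R21 R22 R12 N0
    using assms(1-5) by unfold_locales
  let ?ER2 = "ER2 R11 R22 R21 N0"
  have feas: "P2_feasible R11 R22 R12 N0 P1max P2max \<tau>1 P1 u1 P2 u2"
    and opt: "\<And>P1' u1' P2' u2'. P2_feasible R11 R22 R12 N0 P1max P2max \<tau>1 P1' u1' P2' u2'
                \<Longrightarrow> ?ER2 P1' u1' P2' u2' \<le> ?ER2 P1 u1 P2 u2"
    using assms(10) by (auto simp: P2_optimal_def)
  then have u: "beamformer R11 u1" "beamformer R22 u2" and P: "0 \<le> P1" "0 \<le> P2"
    by (auto simp: P2_feasible_def)
  assume "\<not> (P1 = P1max \<or> P2 = P2max)"
  then have below: "P1 < P1max" "P2 < P2max" using feas by (auto simp: P2_feasible_def)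
  show False
  proof (cases "0 < ?ER2 P1 u1 P2 u2")
    case True
    have "0 < P2" using True P by (cases "P2 = 0") (auto simp: ER2_eq_integral)
    moreover have "0 < P1" using feasible_imp_power1_pos[OF feas assms(8)] .
    ultimately have "1 < min (P1max / P1) (P2max / P2)"
      using below by simp
    with below \<open>0 < P1\<close> \<open>0 < P2\<close> obtain c where c: "1 < c" "c * P1 \<le> P1max" "c * P2 \<le> P2max"
      by (metis min.cobounded1 min.cobounded2 pos_le_divide_eq mult.commute)
    have "?ER2 P1 u1 P2 u2 < ?ER2 (c * P1) u1 (c * P2) u2"
      using ER2_less_scale_powers[OF u P c(1) True] .
    moreover have "?ER2 (c * P1) u1 (c * P2) u2 \<le> ?ER2 P1 u1 P2 u2"
      using c by (intro opt feasible_scale_powers[OF feas assms(8)]) auto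
    ultimately show False by simp
  next
    case False
    obtain Q where "0 < Q" and feas': "P2_feasible R11 R22 R12 N0 P1max P2max \<tau>1 P1max u1 Q sgn"
      using feasible_full_power_matched_filter[OF feas assms(8) below(1) assms(7)] .
    have "0 < ?ER2 P1max u1 Q sgn"
      using u(1) assms(6) \<open>0 < Q\<close> feasible_imp_channels_nonzero[OF feas assms(8)]
      by (intro ER2_pos_matched_filter) auto
    with False opt[OF feas'] show False by simp
  qed
qed

end
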